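(* For all $n\ge0$, $\ell\ge1$ and every $\varphi\in\mathcal{B}\Sigma_{n,\ell}$, there exists a formula $\varphi'\in\mathrm{FOC}(\{\mathsf{P}_\exists\})$ equivalent to $\varphi$ such that $\mathrm{free}(\varphi')=\mathrm{free}(\varphi)$, $\mathrm{bw}(\varphi')\le\ell$ and $\mathrm{br}(\varphi')\le n$.
   Context: $\mathcal{B}\Sigma_{0,\ell}$ is the set of quantifier-free first-order formulas; a formula belongs to $\mathcal{B}\Sigma_{n+1,\ell}$ if it is a Boolean combination of formulas $\exists x_1\cdots\exists x_k\,\psi$ with $k\le\ell$ and $\psi\in\mathcal{B}\Sigma_{n,\ell}$. $\mathsf{P}_\exists$ is a unary numerical predicate with semantics $\{1,2,3,\dots\}$. The logic $\mathrm{FOC}(\{\mathsf{P}_\exists\})$ consists of formulas and counting terms built by: atomic first-order formulas; $\neg$, $\vee$; $\exists y$ for (structure) variables $y$; $\mathsf{P}_\exists(t)$ for a counting term $t$, true iff the value of $t$ is $\ge1$; counting terms $\#\bar y.\varphi$ for a tuple $\bar y$ of $\ge1$ pairwise distinct variables, with value the number of tuples of elements satisfying $\varphi$ for $\bar y$; integers; $(t_1+t_2)$, $(t_1\cdot t_2)$. Two formulas are equivalent if they agree in all (finite) structures under all assignments. $\mathrm{br}$ is the maximal nesting depth of constructs $\exists y$ and $\#\bar y$; $\mathrm{bw}$ is the maximal $|\bar y|$ over counting terms $\#\bar y.\psi$ occurring, and if none occurs, $1$ if some $\exists y$ occurs and $0$ otherwise. *)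

theory Defs
  imports Main
begin

text \<open>A (finite) structure is given by a finite nonempty universe U of elements
(taken WLOG from nat: every finite structure is isomorphic to one on a subset of nat)
and an interpretation I of the relation symbols ('r) as predicates on tuples (lists).\<close>

definition upd :: "(nat \<Rightarrow> nat) \<Rightarrow> nat list \<Rightarrow> nat list \<Rightarrow> nat \<Rightarrow> nat" where
  "upd \<beta> ys as = (\<lambda>v. case map_of (zip ys as) v of Some a \<Rightarrow> a | None \<Rightarrow> \<beta> v)"

datatype 'r fo =
    Atom 'r "nat list"
  | Eq nat nat
  | Neg "'r fo"
  | Or "'r fo" "'r fo"
  | Ex nat "'r fo"

fun sat_fo :: "nat set \<Rightarrow> ('r \<Rightarrow> nat list \<Rightarrow> bool) \<Rightarrow> (nat \<Rightarrow> nat) \<Rightarrow> 'r fo \<Rightarrow> bool" where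
  "sat_fo U I \<beta> (Atom r xs) = I r (map \<beta> xs)"
| "sat_fo U I \<beta> (Eq x y) = (\<beta> x = \<beta> y)"
| "sat_fo U I \<beta> (Neg \<phi>) = (\<not> sat_fo U I \<beta> \<phi>)"
| "sat_fo U I \<beta> (Or \<phi> \<psi>) = (sat_fo U I \<beta> \<phi> \<or> sat_fo U I \<beta> \<psi>)"
| "sat_fo U I \<beta> (Ex x \<phi>) = (\<exists>a\<in>U. sat_fo U I (\<beta>(x := a)) \<phi>)"

fun free_fo :: "'r fo \<Rightarrow> nat set" where
  "free_fo (Atom r xs) = set xs"
| "free_fo (Eq x y) = {x, y}"
| "free_fo (Neg \<phi>) = free_fo \<phi>"
| "free_fo (Or \<phi> \<psi>) = free_fo \<phi> \<union> free_fo \<psi>"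
| "free_fo (Ex x \<phi>) = free_fo \<phi> - {x}"

fun qfree :: "'r fo \<Rightarrow> bool" where
  "qfree (Atom r xs) = True"
| "qfree (Eq x y) = True"
| "qfree (Neg \<phi>) = qfree \<phi>"
| "qfree (Or \<phi> \<psi>) = (qfree \<phi> \<and> qfree \<psi>)"
| "qfree (Ex x \<phi>) = False"

definition ex_block :: "nat list \<Rightarrow> 'r fo \<Rightarrow> 'r fo" where
  "ex_block xs \<psi> = foldr Ex xs \<psi>"

inductive bool_comb :: "'r fo set \<Rightarrow> 'r fo \<Rightarrow> bool" for S where
  base: "\<phi> \<in> S \<Longrightarrow> bool_comb S \<phi>"
| neg: "bool_comb S \<phi> \<Longrightarrow> bool_comb S (Neg \<phi>)"
| disj: "bool_comb S \<phi> \<Longrightarrow> bool_comb S \<psi> \<Longrightarrow> bool_comb S (Or \<phi> \<psi>)"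

fun BSigma :: "nat \<Rightarrow> nat \<Rightarrow> 'r fo set" where
  "BSigma 0 l = {\<phi>. qfree \<phi>}"
| "BSigma (Suc n) l =
     {\<phi>. bool_comb {ex_block xs \<psi> | xs \<psi>. length xs \<le> l \<and> \<psi> \<in> BSigma n l} \<phi>}"

datatype 'r focf =
    FAtom 'r "nat list"
  | FEq nat nat
  | FNeg "'r focf"
  | FOr "'r focf" "'r focf"
  | FEx nat "'r focf"
  | FPex "'r foct"
and 'r foct =
    Count "nat list" "'r focf"
  | Const int
  | Plus "'r foct" "'r foct"
  | Times "'r foct" "'r foct"

fun sat_foc :: "nat set \<Rightarrow> ('r \<Rightarrow> nat list \<Rightarrow> bool) \<Rightarrow> (nat \<Rightarrow> nat) \<Rightarrow> 'r focf \<Rightarrow> bool"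
and val_foc :: "nat set \<Rightarrow> ('r \<Rightarrow> nat list \<Rightarrow> bool) \<Rightarrow> (nat \<Rightarrow> nat) \<Rightarrow> 'r foct \<Rightarrow> int" where
  "sat_foc U I \<beta> (FAtom r xs) = I r (map \<beta> xs)"
| "sat_foc U I \<beta> (FEq x y) = (\<beta> x = \<beta> y)"
| "sat_foc U I \<beta> (FNeg \<phi>) = (\<not> sat_foc U I \<beta> \<phi>)"
| "sat_foc U I \<beta> (FOr \<phi> \<psi>) = (sat_foc U I \<beta> \<phi> \<or> sat_foc U I \<beta> \<psi>)"
| "sat_foc U I \<beta> (FEx x \<phi>) = (\<exists>a\<in>U. sat_foc U I (\<beta>(x := a)) \<phi>)"
| "sat_foc U I \<beta> (FPex t) = (val_foc U I \<beta> t \<ge> 1)"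
| "val_foc U I \<beta> (Count ys \<phi>) =
     int (card {as. length as = length ys \<and> set as \<subseteq> U \<and> sat_foc U I (upd \<beta> ys as) \<phi>})"
| "val_foc U I \<beta> (Const i) = i"
| "val_foc U I \<beta> (Plus s t) = val_foc U I \<beta> s + val_foc U I \<beta> t"
| "val_foc U I \<beta> (Times s t) = val_foc U I \<beta> s * val_foc U I \<beta> t"

fun wf_f :: "'r focf \<Rightarrow> bool" and wf_t :: "'r foct \<Rightarrow> bool" where
  "wf_f (FAtom r xs) = True"
| "wf_f (FEq x y) = True"
| "wf_f (FNeg \<phi>) = wf_f \<phi>"
| "wf_f (FOr \<phi> \<psi>) = (wf_f \<phi> \<and> wf_f \<psi>)"
| "wf_f (FEx x \<phi>) = wf_f \<phi>"
| "wf_f (FPex t) = wf_t t"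
| "wf_t (Count ys \<phi>) = (ys \<noteq> [] \<and> distinct ys \<and> wf_f \<phi>)"
| "wf_t (Const i) = True"
| "wf_t (Plus s t) = (wf_t s \<and> wf_t t)"
| "wf_t (Times s t) = (wf_t s \<and> wf_t t)"

fun free_f :: "'r focf \<Rightarrow> nat set" and free_t :: "'r foct \<Rightarrow> nat set" where
  "free_f (FAtom r xs) = set xs"
| "free_f (FEq x y) = {x, y}"
| "free_f (FNeg \<phi>) = free_f \<phi>"
| "free_f (FOr \<phi> \<psi>) = free_f \<phi> \<union> free_f \<psi>"
| "free_f (FEx x \<phi>) = free_f \<phi> - {x}"
| "free_f (FPex t) = free_t t"
| "free_t (Count ys \<phi>) = free_f \<phi> - set ys"
| "free_t (Const i) = {}"
| "free_t (Plus s t) = free_t s \<union> free_t t"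
| "free_t (Times s t) = free_t s \<union> free_t t"

fun br_f :: "'r focf \<Rightarrow> nat" and br_t :: "'r foct \<Rightarrow> nat" where
  "br_f (FAtom r xs) = 0"
| "br_f (FEq x y) = 0"
| "br_f (FNeg \<phi>) = br_f \<phi>"
| "br_f (FOr \<phi> \<psi>) = max (br_f \<phi>) (br_f \<psi>)"
| "br_f (FEx x \<phi>) = Suc (br_f \<phi>)"
| "br_f (FPex t) = br_t t"
| "br_t (Count ys \<phi>) = Suc (br_f \<phi>)"
| "br_t (Const i) = 0"
| "br_t (Plus s t) = max (br_t s) (br_t t)"
| "br_t (Times s t) = max (br_t s) (br_t t)"

fun cw_f :: "'r focf \<Rightarrow> nat" and cw_t :: "'r foct \<Rightarrow> nat" where
  "cw_f (FAtom r xs) = 0"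
| "cw_f (FEq x y) = 0"
| "cw_f (FNeg \<phi>) = cw_f \<phi>"
| "cw_f (FOr \<phi> \<psi>) = max (cw_f \<phi>) (cw_f \<psi>)"
| "cw_f (FEx x \<phi>) = cw_f \<phi>"
| "cw_f (FPex t) = cw_t t"
| "cw_t (Count ys \<phi>) = max (length ys) (cw_f \<phi>)"
| "cw_t (Const i) = 0"
| "cw_t (Plus s t) = max (cw_t s) (cw_t t)"
| "cw_t (Times s t) = max (cw_t s) (cw_t t)"

fun hc_f :: "'r focf \<Rightarrow> bool" and hc_t :: "'r foct \<Rightarrow> bool" where
  "hc_f (FAtom r xs) = False"
| "hc_f (FEq x y) = False"
| "hc_f (FNeg \<phi>) = hc_f \<phi>"
| "hc_f (FOr \<phi> \<psi>) = (hc_f \<phi> \<or> hc_f \<psi>)"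
| "hc_f (FEx x \<phi>) = hc_f \<phi>"
| "hc_f (FPex t) = hc_t t"
| "hc_t (Count ys \<phi>) = True"
| "hc_t (Const i) = False"
| "hc_t (Plus s t) = (hc_t s \<or> hc_t t)"
| "hc_t (Times s t) = (hc_t s \<or> hc_t t)"

fun he_f :: "'r focf \<Rightarrow> bool" and he_t :: "'r foct \<Rightarrow> bool" where
  "he_f (FAtom r xs) = False"
| "he_f (FEq x y) = False"
| "he_f (FNeg \<phi>) = he_f \<phi>"
| "he_f (FOr \<phi> \<psi>) = (he_f \<phi> \<or> he_f \<psi>)"
| "he_f (FEx x \<phi>) = True"
| "he_f (FPex t) = he_t t"
| "he_t (Count ys \<phi>) = he_f \<phi>"
| "he_t (Const i) = False"
| "he_t (Plus s t) = (he_t s \<or> he_t t)"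
| "he_t (Times s t) = (he_t s \<or> he_t t)"

definition bw :: "'r focf \<Rightarrow> nat" where
  "bw \<phi> = (if hc_f \<phi> then cw_f \<phi> else if he_f \<phi> then 1 else 0)"

definition br :: "'r focf \<Rightarrow> nat" where
  "br \<phi> = br_f \<phi>"

definition equiv_fo_foc :: "'r fo \<Rightarrow> 'r focf \<Rightarrow> bool" where
  "equiv_fo_foc \<phi> \<psi> \<longleftrightarrow>
     (\<forall>U I \<beta>. finite U \<and> U \<noteq> {} \<and> range \<beta> \<subseteq> U \<longrightarrow>
        (sat_fo U I \<beta> \<phi> \<longleftrightarrow> sat_foc U I \<beta> \<psi>))"

end

theory Submission
  imports Defs
begin

text \<open>An existential block \<open>\<exists>x\<^sub>1\<dots>\<exists>x\<^sub>k \<psi>\<close> with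
  \<open>\<psi>\<close> translated to \<open>\<psi>'\<close> becomes \<open>P\<^sub>\<exists>(#(x\<^sub>1,\<dots>,x\<^sub>k). \<psi>')\<close> (repeated variables removed):
  the count of witnessing tuples is positive iff a witness exists. This costs one level
  of rank and width at most \<open>k \<le> \<ell>\<close>, and Boolean combinations are translated
  componentwise.\<close>

fun fo_to_foc :: "'r fo \<Rightarrow> 'r focf" where
  "fo_to_foc (Atom r xs) = FAtom r xs"
| "fo_to_foc (Eq x y) = FEq x y"
| "fo_to_foc (Neg \<phi>) = FNeg (fo_to_foc \<phi>)"
| "fo_to_foc (Or \<phi> \<psi>) = FOr (fo_to_foc \<phi>) (fo_to_foc \<psi>)"
| "fo_to_foc (Ex x \<phi>) = FEx x (fo_to_foc \<phi>)"

lemma sat_foc_fo_to_foc: "sat_foc U I \<beta> (fo_to_foc \<phi>) = sat_fo U I \<beta> \<phi>"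
  by (induction \<phi> arbitrary: \<beta>) auto

lemma wf_f_fo_to_foc: "wf_f (fo_to_foc \<phi>)"
  by (induction \<phi>) auto

lemma free_f_fo_to_foc: "free_f (fo_to_foc \<phi>) = free_fo \<phi>"
  by (induction \<phi>) auto

lemma cw_f_fo_to_foc: "cw_f (fo_to_foc \<phi>) = 0"
  by (induction \<phi>) auto

lemma br_f_fo_to_foc_qfree: "qfree \<phi> \<Longrightarrow> br_f (fo_to_foc \<phi>) = 0"
  by (induction \<phi>) auto

lemma free_fo_ex_block: "free_fo (ex_block xs \<psi>) = free_fo \<psi> - set xs"
  by (induction xs) (auto simp: ex_block_def)

lemma sat_fo_ex_block:
  "sat_fo U I \<beta> (ex_block xs \<psi>) \<longleftrightarrow>
    (\<exists>\<gamma>. (\<forall>v. v \<notin> set xs \<longrightarrow> \<gamma> v = \<beta> v) \<and> (\<forall>v\<in>set xs. \<gamma> v \<in> U) \<and> sat_fo U I \<gamma> \<psi>)"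
proof (induction xs arbitrary: \<beta>)
  case Nil
  then show ?case by (simp add: ex_block_def fun_eq_iff[symmetric])
next
  case (Cons x xs)
  have "sat_fo U I \<beta> (ex_block (x # xs) \<psi>) \<longleftrightarrow> (\<exists>a\<in>U. sat_fo U I (\<beta>(x := a)) (ex_block xs \<psi>))"
    by (simp add: ex_block_def)
  also have "\<dots> \<longleftrightarrow> (\<exists>\<gamma>. (\<forall>v. v \<notin> set (x # xs) \<longrightarrow> \<gamma> v = \<beta> v) \<and> (\<forall>v\<in>set (x # xs). \<gamma> v \<in> U)
                        \<and> sat_fo U I \<gamma> \<psi>)"
  proof
    assume "\<exists>a\<in>U. sat_fo U I (\<beta>(x := a)) (ex_block xs \<psi>)"
    then obtain a \<gamma> where "a \<in> U" and \<gamma>: "\<forall>v. v \<notin> set xs \<longrightarrow> \<gamma> v = (\<beta>(x := a)) v"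
      "\<forall>v\<in>set xs. \<gamma> v \<in> U" "sat_fo U I \<gamma> \<psi>"
      using Cons.IH by blast
    then have "\<gamma> x \<in> U" by (cases "x \<in> set xs") auto
    with \<gamma> show "\<exists>\<gamma>. (\<forall>v. v \<notin> set (x # xs) \<longrightarrow> \<gamma> v = \<beta> v) \<and> (\<forall>v\<in>set (x # xs). \<gamma> v \<in> U)
                  \<and> sat_fo U I \<gamma> \<psi>"
      by (intro exI[of _ \<gamma>]) auto
  next
    assume "\<exists>\<gamma>. (\<forall>v. v \<notin> set (x # xs) \<longrightarrow> \<gamma> v = \<beta> v) \<and> (\<forall>v\<in>set (x # xs). \<gamma> v \<in> U)
              \<and> sat_fo U I \<gamma> \<psi>"
    then obtain \<gamma> where \<gamma>: "\<forall>v. v \<notin> set (x # xs) \<longrightarrow> \<gamma> v = \<beta> v"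
      "\<forall>v\<in>set (x # xs). \<gamma> v \<in> U" "sat_fo U I \<gamma> \<psi>"
      by blast
    then have "sat_fo U I (\<beta>(x := \<gamma> x)) (ex_block xs \<psi>)"
      by (intro Cons.IH[THEN iffD2] exI[of _ \<gamma>]) auto
    with \<gamma> show "\<exists>a\<in>U. sat_fo U I (\<beta>(x := a)) (ex_block xs \<psi>)" by auto
  qed
  finally show ?case .
qed

lemma fst_set_zip: "length as = length ys \<Longrightarrow> fst ` set (zip ys as) = set ys"
  by (metis map_fst_zip set_map)

lemma upd_notin:
  assumes "length as = length ys" "v \<notin> set ys"
  shows "upd \<beta> ys as v = \<beta> v"
proof -
  have "map_of (zip ys as) v = None"
    using assms by (simp add: map_of_eq_None_iff fst_set_zip)
  then show ?thesis by (simp add: upd_def)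
qed

lemma upd_in_set:
  assumes "length as = length ys" "v \<in> set ys"
  shows "upd \<beta> ys as v \<in> set as"
proof -
  obtain a where a: "map_of (zip ys as) v = Some a"
    using assms by (cases "map_of (zip ys as) v") (auto simp: map_of_eq_None_iff fst_set_zip)
  then have "a \<in> set as" by (meson map_of_SomeD set_zip_rightD)
  with a show ?thesis by (simp add: upd_def)
qed

lemma upd_map: "upd \<beta> ys (map \<gamma> ys) = (\<lambda>v. if v \<in> set ys then \<gamma> v else \<beta> v)"
  unfolding upd_def by (auto simp: map_of_zip_map)

lemma sat_foc_FPex_Count:
  assumes "finite U"
  shows "sat_foc U I \<beta> (FPex (Count ys \<phi>)) \<longleftrightarrow>
           (\<exists>as. length as = length ys \<and> set as \<subseteq> U \<and> sat_foc U I (upd \<beta> ys as) \<phi>)"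
proof -
  let ?A = "{as. length as = length ys \<and> set as \<subseteq> U \<and> sat_foc U I (upd \<beta> ys as) \<phi>}"
  have "?A \<subseteq> {as. set as \<subseteq> U \<and> length as = length ys}" by auto
  then have "finite ?A"
    using finite_lists_length_eq[OF assms] finite_subset by blast
  then show ?thesis by (auto simp: Suc_le_eq card_gt_0_iff)
qed

lemma ex_upd_iff_ex_block:
  assumes "set ys = set xs"
  shows "(\<exists>as. length as = length ys \<and> set as \<subseteq> U \<and> sat_fo U I (upd \<beta> ys as) \<psi>) \<longleftrightarrow>
           sat_fo U I \<beta> (ex_block xs \<psi>)"
  unfolding sat_fo_ex_block
proof
  assume "\<exists>as. length as = length ys \<and> set as \<subseteq> U \<and> sat_fo U I (upd \<beta> ys as) \<psi>"
  then obtain as where as: "length as = length ys" "set as \<subseteq> U" "sat_fo U I (upd \<beta> ys as) \<psi>"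
    by blast
  show "\<exists>\<gamma>. (\<forall>v. v \<notin> set xs \<longrightarrow> \<gamma> v = \<beta> v) \<and> (\<forall>v\<in>set xs. \<gamma> v \<in> U) \<and> sat_fo U I \<gamma> \<psi>"
    using as upd_notin[OF as(1)] upd_in_set[OF as(1)] assms
    by (intro exI[of _ "upd \<beta> ys as"]) blast
next
  assume "\<exists>\<gamma>. (\<forall>v. v \<notin> set xs \<longrightarrow> \<gamma> v = \<beta> v) \<and> (\<forall>v\<in>set xs. \<gamma> v \<in> U) \<and> sat_fo U I \<gamma> \<psi>"
  then obtain \<gamma> where \<gamma>: "\<forall>v. v \<notin> set xs \<longrightarrow> \<gamma> v = \<beta> v" "\<forall>v\<in>set xs. \<gamma> v \<in> U" "sat_fo U I \<gamma> \<psi>"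
    by blast
  then have "upd \<beta> ys (map \<gamma> ys) = \<gamma>" using assms by (auto simp: upd_map)
  with \<gamma> assms show "\<exists>as. length as = length ys \<and> set as \<subseteq> U \<and> sat_fo U I (upd \<beta> ys as) \<psi>"
    by (intro exI[of _ "map \<gamma> ys"]) auto
qed

definition foc_translation :: "nat \<Rightarrow> nat \<Rightarrow> 'r fo \<Rightarrow> 'r focf \<Rightarrow> bool" where
  "foc_translation n l \<phi> \<phi>' \<longleftrightarrow>
     wf_f \<phi>' \<and> (\<forall>U I \<beta>. finite U \<longrightarrow> sat_foc U I \<beta> \<phi>' = sat_fo U I \<beta> \<phi>)
     \<and> free_f \<phi>' = free_fo \<phi> \<and> cw_f \<phi>' \<le> l \<and> br_f \<phi>' \<le> n"

lemma foc_translation_qfree: "qfree \<phi> \<Longrightarrow> foc_translation 0 l \<phi> (fo_to_foc \<phi>)"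
  by (simp add: foc_translation_def sat_foc_fo_to_foc wf_f_fo_to_foc free_f_fo_to_foc
      cw_f_fo_to_foc br_f_fo_to_foc_qfree)

lemma foc_translation_Neg:
  "foc_translation n l \<phi> \<phi>' \<Longrightarrow> foc_translation n l (Neg \<phi>) (FNeg \<phi>')"
  by (simp add: foc_translation_def)

lemma foc_translation_Or:
  "foc_translation n l \<phi> \<phi>' \<Longrightarrow> foc_translation n l \<psi> \<psi>' \<Longrightarrow>
     foc_translation n l (Or \<phi> \<psi>) (FOr \<phi>' \<psi>')"
  by (simp add: foc_translation_def)

lemma foc_translation_ex_block:
  assumes \<psi>': "foc_translation n l \<psi> \<psi>'" and "length xs \<le> l"
  shows "\<exists>\<phi>'. foc_translation (Suc n) l (ex_block xs \<psi>) \<phi>'"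
proof (cases "xs = []")
  \<comment> \<open>counting terms must bind a nonempty tuple, but the empty block is just \<open>\<psi>\<close>\<close>
  case True
  with \<psi>' show ?thesis
    by (intro exI[of _ \<psi>']) (auto simp: foc_translation_def ex_block_def)
next
  case False
  let ?ys = "remdups xs"
  have "length ?ys \<le> l" using \<open>length xs \<le> l\<close> length_remdups_leq le_trans by blast
  moreover have "sat_foc U I \<beta> (FPex (Count ?ys \<psi>')) = sat_fo U I \<beta> (ex_block xs \<psi>)"
    if "finite U" for U I \<beta>
  proof -
    have "sat_foc U I \<beta> (FPex (Count ?ys \<psi>')) \<longleftrightarrow>
            (\<exists>as. length as = length ?ys \<and> set as \<subseteq> U \<and> sat_fo U I (upd \<beta> ?ys as) \<psi>)"
      using \<psi>' that unfolding sat_foc_FPex_Count[OF that] by (simp add: foc_translation_def)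
    also have "\<dots> \<longleftrightarrow> sat_fo U I \<beta> (ex_block xs \<psi>)"
      by (rule ex_upd_iff_ex_block) simp
    finally show ?thesis .
  qed
  ultimately show ?thesis
    using \<psi>' False
    by (intro exI[of _ "FPex (Count ?ys \<psi>')"]) (auto simp: foc_translation_def free_fo_ex_block)
qed

lemma BSigma_foc_translation: "\<phi> \<in> BSigma n l \<Longrightarrow> \<exists>\<phi>'. foc_translation n l \<phi> \<phi>'"
proof (induction n arbitrary: \<phi>)
  case 0
  then show ?case by (auto intro: foc_translation_qfree)
next
  case (Suc n)
  have "bool_comb {ex_block xs \<psi> | xs \<psi>. length xs \<le> l \<and> \<psi> \<in> BSigma n l} \<phi>"
    using Suc.prems by simp
  then show ?case
  proof (induction rule: bool_comb.induct)
    case (base \<phi>)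
    then show ?case using Suc.IH foc_translation_ex_block by blast
  next
    case (neg \<phi>)
    then show ?case using foc_translation_Neg by blast
  next
    case (disj \<phi> \<psi>)
    then show ?case using foc_translation_Or by blast
  qed
qed

theorem lemma5p5:
  fixes n l :: nat and \<phi> :: "'r fo"
  assumes "l \<ge> 1" and "\<phi> \<in> BSigma n l"
  shows "\<exists>\<phi>' :: 'r focf. wf_f \<phi>' \<and> equiv_fo_foc \<phi> \<phi>' \<and> free_f \<phi>' = free_fo \<phi>
           \<and> bw \<phi>' \<le> l \<and> br \<phi>' \<le> n"
proof -
  obtain \<phi>' where "foc_translation n l \<phi> \<phi>'"
    using BSigma_foc_translation assms(2) by blast
  with assms(1) show ?thesis
    by (intro exI[of _ \<phi>']) (auto simp: foc_translation_def equiv_fo_foc_def bw_def br_def)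
qed

end
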